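(* Let $\Phi$ be a convex growth function and $\alpha>-1$. Then for any $z=x+iy\in \mathbb{C}_+$, the function $$f_z(w):=\Phi^{-1}\left(\frac 1{y^{2+\alpha}}\right)\frac{y^{4+2\alpha}}{(w-\bar{z})^{4+2\alpha}},\quad w\in\mathbb{C}_+,$$ belongs to $A_\alpha^\Phi(\mathbb{C}_+)$. Moreover, $$\int_{\mathbb{C}_+}\Phi(|f_z(w)|)dV_\alpha(w)\le B\left(\tfrac{1}{2}, \tfrac{3+2\alpha}{2}\right)B(1+\alpha, 2+\alpha).$$
   Context: $\mathbb{C}_+=\{x+iy: y>0\}$. A growth function is a continuous nondecreasing function from $[0,\infty)$ onto $[0,\infty)$; $\Phi^{-1}$ is its inverse. $dV_\alpha(x+iy)=y^\alpha dxdy$; $A^\Phi_\alpha(\mathbb{C}_+)$ is the space of holomorphic $f$ on $\mathbb{C}_+$ with $\int\Phi(|f|)dV_\alpha<\infty$. $B(m,n)=\int_0^\infty\frac{u^{m-1}}{(1+u)^{m+n}}du$ is the beta function; $(w-\bar z)^{4+2\alpha}$ is defined with the principal branch (note $w-\bar z$ lies in the upper half-plane). *)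

theory Defs
  imports "HOL-Complex_Analysis.Complex_Analysis"
begin

definition upper_half_plane :: "complex set" where
  "upper_half_plane = {w. 0 < Im w}"

definition growth_function :: "(real \<Rightarrow> real) \<Rightarrow> bool" where
  "growth_function \<Phi> \<longleftrightarrow> continuous_on {0..} \<Phi> \<and> mono_on {0..} \<Phi> \<and> \<Phi> ` {0..} = {0..}"

definition growth_inv :: "(real \<Rightarrow> real) \<Rightarrow> real \<Rightarrow> real" where
  "growth_inv \<Phi> t = inv_into {0..} \<Phi> t"

definition orlicz_modular :: "(real \<Rightarrow> real) \<Rightarrow> real \<Rightarrow> (complex \<Rightarrow> complex) \<Rightarrow> ennreal" where
  "orlicz_modular \<Phi> \<alpha> f =
     (\<integral>\<^sup>+ w. indicator upper_half_plane w * ennreal (\<Phi> (cmod (f w)) * Im w powr \<alpha>) \<partial>lborel)"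

definition bergman_orlicz :: "(real \<Rightarrow> real) \<Rightarrow> real \<Rightarrow> (complex \<Rightarrow> complex) set" where
  "bergman_orlicz \<Phi> \<alpha> =
     {f. f holomorphic_on upper_half_plane \<and> orlicz_modular \<Phi> \<alpha> f < \<infinity>}"

end

theory Submission
  imports Defs
begin

text \<open>
  Convexity and \<open>\<Phi> 0 = 0\<close> give \<open>\<Phi> (t * a) \<le> t * \<Phi> a\<close> for \<open>0 \<le> t \<le> 1\<close>. With
  \<open>y = Im z\<close>, the modulus of the test function is \<open>t * growth_inv \<Phi> (y powr -(2 + \<alpha>))\<close> where
  \<open>t = (y / |w - cnj z|) powr (4 + 2 \<alpha>) \<le> 1\<close>, so \<open>\<Phi>\<close> of it is at most the kernel
  \<open>y powr (2 + \<alpha>) * |w - cnj z| powr -(4 + 2 \<alpha>)\<close>. The kernel is integrated against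
  \<open>dV\<^sub>\<alpha>\<close> by Fubini: the integral in \<open>Re w\<close> is \<open>B(1/2, (3 + 2 \<alpha>) / 2) (Im w + y) powr -(3 + 2 \<alpha>)\<close>,
  and the substitution \<open>Im w = y t / (1 - t)\<close> turns the remaining integral in \<open>Im w\<close> into
  \<open>B(1 + \<alpha>, 2 + \<alpha>) y powr -(2 + \<alpha>)\<close>, cancelling the factor \<open>y powr (2 + \<alpha>)\<close>.
\<close>

lemma has_integral_change_of_variables_nonneg:
  fixes F g g' :: "real \<Rightarrow> real"
  assumes S: "S \<in> sets lebesgue"
    and deriv: "\<And>t. t \<in> S \<Longrightarrow> (g has_field_derivative g' t) (at t within S)"
    and inj: "inj_on g S"
    and nonneg: "\<And>t. t \<in> S \<Longrightarrow> 0 \<le> \<bar>g' t\<bar> * F (g t)"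
    and int: "((\<lambda>t. \<bar>g' t\<bar> * F (g t)) has_integral I) S"
  shows "(F has_integral I) (g ` S)"
proof -
  have "(\<lambda>t. \<bar>g' t\<bar> * F (g t)) absolutely_integrable_on S"
    using int nonneg by (subst absolutely_integrable_on_iff_nonneg) (auto simp: has_integral_integrable)
  then have "F absolutely_integrable_on g ` S \<and> integral (g ` S) F = I"
    using has_absolute_integral_change_of_variables_1'[OF S deriv inj, of F I] int
    by (simp add: integral_unique)
  then show ?thesis
    by (metis integrable_integral set_lebesgue_integral_eq_integral(1))
qed

lemma Beta_real_pos:
  fixes a b :: real
  shows "0 < a \<Longrightarrow> 0 < b \<Longrightarrow> 0 < Beta a b"
  by (simp add: Beta_def)

lemma has_integral_Beta_halfline:
  fixes a b y :: real
  assumes "0 < a" "0 < b" "0 < y"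
  shows "((\<lambda>v. v powr (a - 1) * (v + y) powr (-(a + b))) has_integral y powr (-b) * Beta a b) {0<..}"
proof -
  define g where "g t = y * t / (1 - t)" for t :: real
  define g' where "g' t = y / (1 - t)\<^sup>2" for t :: real
  have deriv: "(g has_field_derivative g' t) (at t within {0<..<1})" if "t \<in> {0<..<1}" for t
    using that unfolding g_def g'_def
    by (auto intro!: derivative_eq_intros simp: field_simps power2_eq_square)
  have inj: "inj_on g {0<..<1}"
    using \<open>0 < y\<close> by (auto intro!: inj_onI simp: g_def field_simps)
  have image: "g ` {0<..<1} = {0<..}"
  proof (intro subset_antisym subsetI)
    fix v :: real assume "v \<in> {0<..}"
    then have "0 < v" by simp
    then have "1 - v / (v + y) = y / (v + y)" "v / (v + y) \<in> {0<..<1}"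
      using \<open>0 < y\<close> by (auto simp: field_simps)
    then have "v = g (v / (v + y))" "v / (v + y) \<in> {0<..<1}"
      using \<open>0 < y\<close> \<open>0 < v\<close> by (auto simp: g_def)
    then show "v \<in> g ` {0<..<1}" by blast
  qed (use \<open>0 < y\<close> in \<open>auto simp: g_def\<close>)
  have integrand: "\<bar>g' t\<bar> * (g t powr (a - 1) * (g t + y) powr (-(a + b)))
      = y powr (-b) * (t powr (a - 1) * (1 - t) powr (b - 1))" if "t \<in> {0<..<1}" for t
  proof -
    have t: "0 < t" "t < 1" using that by auto
    have "\<bar>g' t\<bar> = y * (1 - t) powr (-2)"
      using t \<open>0 < y\<close> by (simp add: g'_def powr_minus divide_inverse)
    moreover have "g t powr (a - 1) = y powr (a - 1) * t powr (a - 1) * (1 - t) powr (1 - a)"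
      using t \<open>0 < y\<close> by (simp add: g_def powr_divide powr_mult divide_inverse inverse_powr flip: powr_minus)
    moreover have "(g t + y) powr (-(a + b)) = y powr (-(a + b)) * (1 - t) powr (a + b)"
    proof -
      have "g t + y = y / (1 - t)" using t by (simp add: g_def field_simps)
      then show ?thesis
        using t \<open>0 < y\<close> powr_divide[of y "1 - t" "-(a + b)"] powr_minus[of "1 - t" "-(a + b)"]
        by (simp add: divide_inverse ac_simps)
    qed
    ultimately have "\<bar>g' t\<bar> * (g t powr (a - 1) * (g t + y) powr (-(a + b)))
        = (y powr 1 * y powr (a - 1) * y powr (-(a + b))) * t powr (a - 1)
          * ((1 - t) powr (-2) * (1 - t) powr (1 - a) * (1 - t) powr (a + b))"
      using \<open>0 < y\<close> by (simp add: ac_simps)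
    also have "\<dots> = y powr (1 + (a - 1) + -(a + b)) * t powr (a - 1) * (1 - t) powr (-2 + (1 - a) + (a + b))"
      by (simp only: powr_add)
    also have "\<dots> = y powr (-b) * (t powr (a - 1) * (1 - t) powr (b - 1))"
      by (simp add: algebra_simps)
    finally show ?thesis .
  qed
  have "((\<lambda>t. y powr (-b) * (t powr (a - 1) * (1 - t) powr (b - 1))) has_integral y powr (-b) * Beta a b) {0<..<1}"
    using has_integral_mult_right[OF has_integral_Beta_real[OF \<open>0 < a\<close> \<open>0 < b\<close>]]
    by (simp add: has_integral_Icc_iff_Ioo)
  then have "((\<lambda>t. \<bar>g' t\<bar> * (g t powr (a - 1) * (g t + y) powr (-(a + b)))) has_integral y powr (-b) * Beta a b) {0<..<1}"
    by (rule has_integral_eq[rotated]) (simp add: integrand del: minus_add_distrib)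
  from has_integral_change_of_variables_nonneg[OF _ deriv inj _ this, unfolded image] show ?thesis
    using \<open>0 < y\<close> by (simp add: g_def)
qed

lemma has_integral_quadratic_powr_halfline:
  fixes c s :: real
  assumes "0 < c" "1/2 < s"
  shows "((\<lambda>r. (r\<^sup>2 + c\<^sup>2) powr (-s)) has_integral c powr (1 - 2 * s) * Beta (1/2) (s - 1/2) / 2) {0<..}"
proof -
  define g' where "g' v = inverse (sqrt v) / 2" for v :: real
  have deriv: "(sqrt has_field_derivative g' v) (at v within {0<..})" if "v \<in> {0<..}" for v
    unfolding g'_def by (rule has_field_derivative_at_within[OF DERIV_real_sqrt]) (use that in simp)
  have image: "sqrt ` {0<..} = {0<..}"
  proof (intro subset_antisym subsetI)
    fix r :: real assume "r \<in> {0<..}"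
    then have "r = sqrt (r\<^sup>2)" "r\<^sup>2 \<in> {0<..}" by auto
    then show "r \<in> sqrt ` {0<..}" by blast
  qed auto
  have integrand: "\<bar>g' v\<bar> * ((sqrt v)\<^sup>2 + c\<^sup>2) powr (-s)
      = 1/2 * (v powr (1/2 - 1) * (v + c\<^sup>2) powr (-(1/2 + (s - 1/2))))" if "v \<in> {0<..}" for v
  proof -
    have "v powr (1/2 - 1) = v powr (-(1/2))"
      by (rule arg_cong[where f = "\<lambda>e. v powr e"]) simp
    also have "\<dots> = inverse (sqrt v)"
      using that by (simp only: powr_minus powr_half_sqrt less_imp_le greaterThan_iff)
    finally have "v powr (1/2 - 1) = inverse (sqrt v)" .
    then show ?thesis using that by (simp add: g'_def)
  qed
  have beta: "((\<lambda>v. v powr (1/2 - 1) * (v + c\<^sup>2) powr (-(1/2 + (s - 1/2))))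
      has_integral (c\<^sup>2) powr (-(s - 1/2)) * Beta (1/2) (s - 1/2)) {0<..}"
    by (rule has_integral_Beta_halfline) (use assms in auto)
  have "(c\<^sup>2) powr (-(s - 1/2)) = c powr (2 * -(s - 1/2))"
    using powr_powr[of c 2 "-(s - 1/2)"] \<open>0 < c\<close> by simp
  then have scaled: "1/2 * ((c\<^sup>2) powr (-(s - 1/2)) * Beta (1/2) (s - 1/2))
      = c powr (1 - 2 * s) * Beta (1/2) (s - 1/2) / 2"
    by (simp add: algebra_simps)
  have "((\<lambda>v. \<bar>g' v\<bar> * ((sqrt v)\<^sup>2 + c\<^sup>2) powr (-s))
      has_integral c powr (1 - 2 * s) * Beta (1/2) (s - 1/2) / 2) {0<..}"
    using has_integral_eq[OF integrand[symmetric] has_integral_mult_right[OF beta]]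
    unfolding scaled .
  from has_integral_change_of_variables_nonneg[OF _ deriv _ _ this, unfolded image] show ?thesis
    by (simp add: g'_def inj_on_def)
qed

lemma nn_integral_quadratic_powr_line:
  fixes c s x :: real
  assumes "0 < c" "1/2 < s"
  shows "(\<integral>\<^sup>+u. ennreal (((u - x)\<^sup>2 + c\<^sup>2) powr (-s)) \<partial>lborel)
    = ennreal (c powr (1 - 2 * s) * Beta (1/2) (s - 1/2))"
proof -
  define F where "F r = (r\<^sup>2 + c\<^sup>2) powr (-s)" for r :: real
  define B where "B = c powr (1 - 2 * s) * Beta (1/2) (s - 1/2)"
  have [measurable]: "F \<in> borel_measurable borel"
    unfolding F_def by measurable
  have "0 < Beta (1/2) (s - 1/2)"
    using \<open>1/2 < s\<close> by (simp add: Beta_real_pos)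
  then have "0 \<le> B"
    by (simp add: B_def)
  have positive_half: "(\<integral>\<^sup>+r. ennreal (F r) * indicator {0<..} r \<partial>lborel) = ennreal (B / 2)"
    unfolding F_def B_def
    by (rule nn_integral_has_integral_lebesgue'[OF _ has_integral_quadratic_powr_halfline[OF assms]]) simp
  have "(\<integral>\<^sup>+r. ennreal (F r) * indicator {..<0} r \<partial>lborel)
      = (\<integral>\<^sup>+r. ennreal (F (-r)) * indicator {..<0} (-r) \<partial>lborel)"
    using nn_integral_real_affine[of "\<lambda>r. ennreal (F r) * indicator {..<0} r" "-1" 0] by simp
  also have "\<dots> = (\<integral>\<^sup>+r. ennreal (F r) * indicator {0<..} r \<partial>lborel)"
    by (intro nn_integral_cong) (simp add: F_def indicator_def)
  finally have negative_half: "(\<integral>\<^sup>+r. ennreal (F r) * indicator {..<0} r \<partial>lborel) = ennreal (B / 2)"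
    using positive_half by simp
  have "(\<integral>\<^sup>+u. ennreal (F (u - x)) \<partial>lborel) = (\<integral>\<^sup>+r. ennreal (F r) \<partial>lborel)"
    using nn_integral_real_affine[of "\<lambda>u. ennreal (F (u - x))" 1 x] by simp
  also have "\<dots> = (\<integral>\<^sup>+r. ennreal (F r) * indicator {0<..} r + ennreal (F r) * indicator {..<0} r \<partial>lborel)"
    by (intro nn_integral_cong_AE eventually_mono[OF AE_lborel_singleton[of 0]])
      (auto simp: indicator_def)
  also have "\<dots> = ennreal B"
    using \<open>0 \<le> B\<close> by (simp add: nn_integral_add positive_half negative_half flip: ennreal_plus)
  finally show ?thesis
    by (simp add: F_def B_def)
qed

lemma distr_lborel_pair_Complex:
  "distr (lborel \<Otimes>\<^sub>M lborel) borel (\<lambda>p. Complex (fst p) (snd p)) = (lborel :: complex measure)"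
proof (rule lborel_eqI[symmetric])
  fix l u :: complex
  assume le: "\<And>b. b \<in> Basis \<Longrightarrow> l \<bullet> b \<le> u \<bullet> b"
  have [measurable]: "(\<lambda>p. Complex (fst p) (snd p)) \<in> borel_measurable (lborel \<Otimes>\<^sub>M lborel)"
    unfolding Complex_eq by measurable
  have "(\<lambda>p. Complex (fst p) (snd p)) -` box l u \<inter> space (lborel \<Otimes>\<^sub>M lborel)
      = {Re l<..<Re u} \<times> {Im l<..<Im u}"
    by (auto simp: box_def Basis_complex_def space_pair_measure)
  moreover have "Re l \<le> Re u" "Im l \<le> Im u"
    using le[of 1] le[of \<i>] by (auto simp: Basis_complex_def)
  ultimately show "emeasure (distr (lborel \<Otimes>\<^sub>M lborel) borel (\<lambda>p. Complex (fst p) (snd p))) (box l u)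
      = (\<Prod>b\<in>Basis. (u - l) \<bullet> b)"
    by (simp add: emeasure_distr lborel.emeasure_pair_measure_Times Basis_complex_def ennreal_mult)
qed simp

lemma nn_integral_lborel_complex:
  assumes [measurable]: "f \<in> borel_measurable borel"
  shows "(\<integral>\<^sup>+w. f w \<partial>lborel) = (\<integral>\<^sup>+v. \<integral>\<^sup>+u. f (Complex u v) \<partial>lborel \<partial>lborel)"
proof -
  have [measurable]: "(\<lambda>p. Complex (fst p) (snd p)) \<in> borel_measurable (lborel \<Otimes>\<^sub>M lborel)"
    unfolding Complex_eq by measurable
  have "(\<integral>\<^sup>+w. f w \<partial>lborel) = (\<integral>\<^sup>+p. f (Complex (fst p) (snd p)) \<partial>(lborel \<Otimes>\<^sub>M lborel))"
    by (subst distr_lborel_pair_Complex[symmetric]) (simp add: nn_integral_distr)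
  also have "\<dots> = (\<integral>\<^sup>+v. \<integral>\<^sup>+u. f (Complex u v) \<partial>lborel \<partial>lborel)"
    by (subst lborel_pair.nn_integral_snd[symmetric]) auto
  finally show ?thesis .
qed

lemma norm_powr_eq_quadratic_powr:
  assumes "0 < norm w"
  shows "cmod w powr (-(2 * s)) = ((Re w)\<^sup>2 + (Im w)\<^sup>2) powr (-s)"
  using assms by (simp add: cmod_def powr_half_sqrt[symmetric] powr_powr)

lemma nn_integral_upper_half_plane_kernel:
  fixes \<alpha> s :: real and z :: complex
  assumes "-1 < \<alpha>" "\<alpha> + 2 < 2 * s" "0 < Im z"
  shows "(\<integral>\<^sup>+w. indicator upper_half_plane w * ennreal (Im w powr \<alpha> * cmod (w - cnj z) powr (-(2 * s))) \<partial>lborel)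
    = ennreal (Im z powr (\<alpha> + 2 - 2 * s) * Beta (1/2) (s - 1/2) * Beta (1 + \<alpha>) (2 * s - 2 - \<alpha>))"
proof -
  define y where "y = Im z"
  define B1 where "B1 = Beta (1/2) (s - 1/2)"
  define B2 where "B2 = Beta (1 + \<alpha>) (2 * s - 2 - \<alpha>)"
  define K where "K w = indicator upper_half_plane w * ennreal (Im w powr \<alpha> * cmod (w - cnj z) powr (-(2 * s)))"
    for w
  have "0 < y" "1/2 < s"
    using assms by (auto simp: y_def)
  have [measurable]: "K \<in> borel_measurable borel"
    unfolding K_def upper_half_plane_def by measurable
  have "0 < B1"
    using \<open>1/2 < s\<close> by (simp add: B1_def Beta_real_pos)
  have inner: "(\<integral>\<^sup>+u. K (Complex u v) \<partial>lborel)
      = ennreal (B1 * (v powr ((1 + \<alpha>) - 1) * (v + y) powr (-((1 + \<alpha>) + (2 * s - 2 - \<alpha>))))) * indicator {0<..} v"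
    for v
  proof (cases "0 < v")
    case True
    have "K (Complex u v) = ennreal (v powr \<alpha>) * ennreal (((u - Re z)\<^sup>2 + (v + y)\<^sup>2) powr (-s))" for u
    proof -
      have "0 < cmod (Complex u v - cnj z)"
        using True \<open>0 < y\<close> by (auto simp: y_def complex_eq_iff)
      then show ?thesis
        using True by (simp add: K_def upper_half_plane_def y_def norm_powr_eq_quadratic_powr ennreal_mult')
    qed
    then have "(\<integral>\<^sup>+u. K (Complex u v) \<partial>lborel)
        = ennreal (v powr \<alpha>) * (\<integral>\<^sup>+u. ennreal (((u - Re z)\<^sup>2 + (v + y)\<^sup>2) powr (-s)) \<partial>lborel)"
      by (simp add: nn_integral_cmult)
    also have "\<dots> = ennreal (v powr \<alpha>) * ennreal ((v + y) powr (1 - 2 * s) * B1)"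
      using nn_integral_quadratic_powr_line[of "v + y" s "Re z"] True \<open>0 < y\<close> \<open>1/2 < s\<close>
      by (simp add: B1_def)
    finally show ?thesis
      using True \<open>0 < y\<close> \<open>0 < B1\<close> by (simp add: ennreal_mult' algebra_simps)
  qed (simp add: K_def upper_half_plane_def)
  have "((\<lambda>v. B1 * (v powr ((1 + \<alpha>) - 1) * (v + y) powr (-((1 + \<alpha>) + (2 * s - 2 - \<alpha>)))))
      has_integral B1 * (y powr (-(2 * s - 2 - \<alpha>)) * B2)) {0<..}"
    unfolding B2_def using assms \<open>0 < y\<close>
    by (intro has_integral_mult_right has_integral_Beta_halfline) auto
  then have "(\<integral>\<^sup>+v. \<integral>\<^sup>+u. K (Complex u v) \<partial>lborel \<partial>lborel) = ennreal (B1 * (y powr (-(2 * s - 2 - \<alpha>)) * B2))"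
    unfolding inner using \<open>0 < B1\<close> \<open>0 < y\<close>
    by (intro nn_integral_has_integral_lebesgue') auto
  then have "(\<integral>\<^sup>+w. K w \<partial>lborel) = ennreal (B1 * (y powr (-(2 * s - 2 - \<alpha>)) * B2))"
    by (simp add: nn_integral_lborel_complex)
  then show ?thesis
    by (simp add: K_def y_def B1_def B2_def algebra_simps)
qed

lemma nn_integral_upper_half_plane_normalized_kernel:
  fixes \<alpha> :: real and z :: complex
  assumes "-1 < \<alpha>" "0 < Im z"
  shows "(\<integral>\<^sup>+w. indicator upper_half_plane w
      * ennreal (Im z powr (2 + \<alpha>) * Im w powr \<alpha> * cmod (w - cnj z) powr (-(4 + 2 * \<alpha>))) \<partial>lborel)
    = ennreal (Beta (1/2) ((3 + 2 * \<alpha>) / 2) * Beta (1 + \<alpha>) (2 + \<alpha>))"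
proof -
  have "Im z powr (2 + \<alpha>) * Im z powr (\<alpha> + 2 - 2 * (2 + \<alpha>)) = 1"
    using \<open>0 < Im z\<close> by (simp flip: powr_add)
  moreover have "2 * (2 + \<alpha>) = 4 + 2 * \<alpha>" "(2 + \<alpha>) - 1/2 = (3 + 2 * \<alpha>) / 2" "2 * (2 + \<alpha>) - 2 - \<alpha> = 2 + \<alpha>"
    by simp_all
  ultimately have normalized: "ennreal (Im z powr (2 + \<alpha>)) * (\<integral>\<^sup>+w. indicator upper_half_plane w
      * ennreal (Im w powr \<alpha> * cmod (w - cnj z) powr (-(4 + 2 * \<alpha>))) \<partial>lborel)
    = ennreal (Beta (1/2) ((3 + 2 * \<alpha>) / 2) * Beta (1 + \<alpha>) (2 + \<alpha>))"
    using nn_integral_upper_half_plane_kernel[of \<alpha> "2 + \<alpha>" z] assms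
    by (simp only: ennreal_mult'[symmetric] powr_ge_zero mult.assoc[symmetric]) simp
  have "(\<integral>\<^sup>+w. indicator upper_half_plane w
      * ennreal (Im z powr (2 + \<alpha>) * Im w powr \<alpha> * cmod (w - cnj z) powr (-(4 + 2 * \<alpha>))) \<partial>lborel)
    = (\<integral>\<^sup>+w. ennreal (Im z powr (2 + \<alpha>)) * (indicator upper_half_plane w
      * ennreal (Im w powr \<alpha> * cmod (w - cnj z) powr (-(4 + 2 * \<alpha>)))) \<partial>lborel)"
    by (intro nn_integral_cong) (simp add: indicator_def ennreal_mult' mult.assoc)
  also have "\<dots> = ennreal (Im z powr (2 + \<alpha>)) * (\<integral>\<^sup>+w. indicator upper_half_plane w
      * ennreal (Im w powr \<alpha> * cmod (w - cnj z) powr (-(4 + 2 * \<alpha>))) \<partial>lborel)"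
    by (rule nn_integral_cmult) (unfold upper_half_plane_def, measurable)
  finally show ?thesis
    unfolding normalized .
qed

lemma growth_function_zero:
  assumes "growth_function \<Phi>"
  shows "\<Phi> 0 = 0"
proof -
  have mono: "mono_on {0..} \<Phi>" and image: "\<Phi> ` {0..} = {0..}"
    using assms by (simp_all add: growth_function_def)
  then obtain a where "0 \<le> a" "\<Phi> a = 0"
    by (metis atLeast_iff image_iff order_refl)
  moreover have "\<Phi> 0 \<le> \<Phi> a"
    using mono_onD[OF mono, of 0 a] \<open>0 \<le> a\<close> by simp
  moreover have "0 \<le> \<Phi> 0"
    using image by auto
  ultimately show ?thesis
    by simp
qed

lemma
  assumes "growth_function \<Phi>" "0 \<le> t"
  shows growth_inv_nonneg: "0 \<le> growth_inv \<Phi> t"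
    and growth_function_growth_inv: "\<Phi> (growth_inv \<Phi> t) = t"
proof -
  have "t \<in> \<Phi> ` {0..}"
    using assms by (simp add: growth_function_def)
  from inv_into_into[OF this] f_inv_into_f[OF this]
  show "0 \<le> growth_inv \<Phi> t" "\<Phi> (growth_inv \<Phi> t) = t"
    by (simp_all add: growth_inv_def)
qed

lemma convex_on_mult_le:
  fixes \<Phi> :: "real \<Rightarrow> real"
  assumes "convex_on {0..} \<Phi>" "\<Phi> 0 = 0" "0 \<le> a" "0 \<le> t" "t \<le> 1"
  shows "\<Phi> (t * a) \<le> t * \<Phi> a"
  using convex_onD[OF assms(1), of t 0 a] assms(2-5) by simp

lemma Im_less_norm_diff_cnj:
  assumes "0 < Im w"
  shows "Im z < cmod (w - cnj z)"
  using abs_Im_le_cmod[of "w - cnj z"] assms by simp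

lemma growth_function_test_function_le:
  fixes \<Phi> :: "real \<Rightarrow> real" and c p :: real and w z :: complex
  assumes "growth_function \<Phi>" "convex_on {0..} \<Phi>" "0 \<le> c" "0 \<le> p" "0 < Im z" "0 < Im w"
  shows "\<Phi> (cmod (complex_of_real (growth_inv \<Phi> c * Im z powr p) / (w - cnj z) powr complex_of_real p))
    \<le> c * Im z powr p * cmod (w - cnj z) powr (-p)"
proof -
  define a where "a = growth_inv \<Phi> c"
  define d where "d = cmod (w - cnj z)"
  define t where "t = (Im z / d) powr p"
  have "Im z < d"
    using Im_less_norm_diff_cnj[OF \<open>0 < Im w\<close>] by (simp add: d_def)
  then have "0 \<le> t" "t \<le> 1"
    using assms by (auto simp: t_def intro!: powr_le1)
  have "0 \<le> a" "\<Phi> a = c"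
    using assms by (simp_all add: a_def growth_inv_nonneg growth_function_growth_inv)
  have "cmod (complex_of_real (a * Im z powr p) / (w - cnj z) powr complex_of_real p) = t * a"
    using \<open>0 \<le> a\<close> \<open>0 < Im z\<close> \<open>Im z < d\<close>
    by (simp add: norm_divide norm_mult norm_powr_real_powr' t_def powr_divide flip: d_def)
  moreover have "\<Phi> (t * a) \<le> t * c"
    using convex_on_mult_le[OF assms(2) growth_function_zero[OF assms(1)] \<open>0 \<le> a\<close> \<open>0 \<le> t\<close> \<open>t \<le> 1\<close>]
    by (simp add: \<open>\<Phi> a = c\<close>)
  moreover have "t = Im z powr p * d powr (-p)"
    using powr_divide[of "Im z" d p] \<open>0 < Im z\<close> \<open>Im z < d\<close> by (simp add: t_def powr_minus divide_inverse)
  ultimately show ?thesis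
    by (simp add: a_def d_def mult.commute mult.left_commute)
qed

lemma holomorphic_on_div_powr_diff_cnj:
  assumes "0 < Im z"
  shows "(\<lambda>w. c / (w - cnj z) powr p) holomorphic_on upper_half_plane"
proof -
  have "w - cnj z \<notin> \<real>\<^sub>\<le>\<^sub>0" if "w \<in> upper_half_plane" for w
    using that assms by (simp add: complex_nonpos_Reals_iff upper_half_plane_def)
  then show ?thesis
    using assms by (intro holomorphic_intros) (auto simp: upper_half_plane_def)
qed

theorem lemma3p14:
  fixes \<Phi> :: "real \<Rightarrow> real" and \<alpha> :: real and z :: complex
  assumes "growth_function \<Phi>" and "convex_on {0..} \<Phi>" and "\<alpha> > -1" and "0 < Im z"
  defines "f \<equiv> (\<lambda>w. complex_of_real (growth_inv \<Phi> (1 / Im z powr (2 + \<alpha>)) * Im z powr (4 + 2 * \<alpha>))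
                     / (w - cnj z) powr complex_of_real (4 + 2 * \<alpha>))"
  shows "f \<in> bergman_orlicz \<Phi> \<alpha> \<and>
         orlicz_modular \<Phi> \<alpha> f \<le> ennreal (Beta (1/2) ((3 + 2 * \<alpha>) / 2) * Beta (1 + \<alpha>) (2 + \<alpha>))"
proof -
  have "1 / Im z powr (2 + \<alpha>) * Im z powr (4 + 2 * \<alpha>) = Im z powr (2 + \<alpha>)"
    using \<open>0 < Im z\<close> by (simp add: powr_diff [symmetric] divide_inverse flip: powr_minus powr_add)
  then have "\<Phi> (cmod (f w)) * Im w powr \<alpha>
      \<le> Im z powr (2 + \<alpha>) * Im w powr \<alpha> * cmod (w - cnj z) powr (-(4 + 2 * \<alpha>))"
    if "w \<in> upper_half_plane" for w
    using growth_function_test_function_le[OF assms(1,2), of "1 / Im z powr (2 + \<alpha>)" "4 + 2 * \<alpha>" z w]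
      that assms(3,4)
    by (auto simp: f_def upper_half_plane_def algebra_simps intro!: mult_right_mono)
  then have "orlicz_modular \<Phi> \<alpha> f \<le> (\<integral>\<^sup>+w. indicator upper_half_plane w
      * ennreal (Im z powr (2 + \<alpha>) * Im w powr \<alpha> * cmod (w - cnj z) powr (-(4 + 2 * \<alpha>))) \<partial>lborel)"
    unfolding orlicz_modular_def
    by (intro nn_integral_mono) (auto simp: indicator_def intro: ennreal_leI)
  also have "\<dots> = ennreal (Beta (1/2) ((3 + 2 * \<alpha>) / 2) * Beta (1 + \<alpha>) (2 + \<alpha>))"
    using assms(3,4) by (rule nn_integral_upper_half_plane_normalized_kernel)
  finally have "orlicz_modular \<Phi> \<alpha> f \<le> ennreal (Beta (1/2) ((3 + 2 * \<alpha>) / 2) * Beta (1 + \<alpha>) (2 + \<alpha>))" .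
  moreover have "f holomorphic_on upper_half_plane"
    unfolding f_def using assms(4) by (rule holomorphic_on_div_powr_diff_cnj)
  ultimately show ?thesis
    unfolding bergman_orlicz_def by (auto intro: le_less_trans[OF _ ennreal_less_top])
qed

end
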